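(* Define $A_n^r(q)$ for integers $n,r\ge 0$ by $A_0^0(q)=1$, $A_0^r(q)=0$ for $r\ge1$, $A_{n+1}^0(q)=1$ for $n\ge 0$, and for $n,r\ge 0$ $$A_{n+1}^{r+1}(q)=q^{r+1}A_n^{r+1}(q)+(q^{n-r}-q^r)A_n^r(q).$$ Then for all integers $n,r\ge 0$, $$A_n^r(q)=\mathrm{CT}_w\left[\frac{(1-w)(1+w)^n q^{r(n-r)}}{w^r}\sum_{i=0}^{\infty}(-1)^i q^{-(i+1)i/2-i(n-2r)}\binom{i+n-2r}{i}_q w^i\right].$$
   Context: For a formal Laurent series $P(w)$ (with coefficients Laurent polynomials in $q$), $\mathrm{CT}_w P(w)$ denotes the coefficient of $w^0$. The $q$-binomial coefficient is $\binom{m}{k}_q=\frac{(1-q^m)(1-q^{m-1})\cdots(1-q^{m-k+1})}{(1-q)(1-q^2)\cdots(1-q^k)}$ when $0\le k\le m$ (integers), and $\binom{m}{k}_q=0$ otherwise (in particular when $m<k$ or $m<0$). *)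

theory Defs
  imports "HOL-Computational_Algebra.Formal_Laurent_Series"
begin

text \<open>The variable q, as a formal Laurent series over the rationals
  (a field containing the Laurent polynomials in q).\<close>
abbreviation qv :: "rat fls" where "qv \<equiv> fls_X"

abbreviation qpow :: "int \<Rightarrow> rat fls" where "qpow k \<equiv> fls_X_intpow k"

definition qbinom :: "int \<Rightarrow> int \<Rightarrow> rat fls" where
  "qbinom m k = (if 0 \<le> k \<and> k \<le> m then
     (\<Prod>j<nat k. (1 - qpow (m - int j))) / (\<Prod>j=1..nat k. (1 - qpow (int j)))
   else 0)"

fun A :: "nat \<Rightarrow> nat \<Rightarrow> rat fls" where
  "A 0 0 = 1"
| "A 0 (Suc r) = 0"
| "A (Suc n) 0 = 1"
| "A (Suc n) (Suc r) = qpow (int r + 1) * A n (Suc r)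
      + (qpow (int n - int r) - qpow (int r)) * A n r"

text \<open>Constant term in w of a formal Laurent series in w whose coefficients
  are Laurent series in q.\<close>
definition CT :: "rat fls fls \<Rightarrow> rat fls" where
  "CT P = fls_nth P 0"

definition Sser :: "nat \<Rightarrow> nat \<Rightarrow> rat fls fls" where
  "Sser n r = fps_to_fls (Abs_fps (\<lambda>i.
      (-1) ^ i * qpow (- (int (i + 1) * int i div 2) - int i * (int n - 2 * int r))
      * qbinom (int i + int n - 2 * int r) (int i)))"

end

theory Submission
  imports Defs
begin

(* Write S_m(w) = sum_i (-1)^i q^(-i(i+1)/2 - i m) [i+m choose i]_q w^i, so that the series in
   the theorem is S_(n-2r). Since multiplying by w^(-r) shifts coefficients, the constant term
   is q^(r(n-r)) times the coefficient of w^r in (1 - w)(1 + w)^n S_(n-2r)(w), and it suffices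
   to show that these numbers obey the recursion defining A. Passing from n to n + 1 multiplies
   by 1 + w, and (1 + w) S_(m-1) = S_(m-2) + (1 - q^(-m)) w S_m up to a constant term present
   only for m = 1; coefficientwise this is the q-Pascal rule combined with the absorption
   identity (q^m - 1) [m+j choose j]_q = (q^(m+j) - 1) [m+j-1 choose j]_q. *)

lemma fls_shift_one_eq_one_iff [simp]:
  "fls_shift i (1 :: 'a :: zero_neq_one fls) = 1 \<longleftrightarrow> i = 0"
proof
  assume "fls_shift i 1 = (1 :: 'a fls)"
  then have "fls_nth (fls_shift i 1) (- i) = fls_nth (1 :: 'a fls) (- i)" by simp
  then show "i = 0" by (simp split: if_splits)
qed simp

definition qfalling :: "int \<Rightarrow> nat \<Rightarrow> rat fls" where
  "qfalling N k = (\<Prod>j<k. 1 - qpow (N - int j))"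

definition qfact :: "nat \<Rightarrow> rat fls" where
  "qfact k = (\<Prod>j=1..k. 1 - qpow (int j))"

lemma qfact_nonzero: "qfact k \<noteq> 0"
  unfolding qfact_def by simp

lemma qfact_Suc: "qfact (Suc k) = qfact k * (1 - qpow (int k + 1))"
  unfolding qfact_def by (simp add: add.commute)

lemma qfalling_Suc: "qfalling N (Suc k) = qfalling N k * (1 - qpow (N - int k))"
  unfolding qfalling_def by simp

lemma qfalling_Suc_shift: "qfalling N (Suc k) = (1 - qpow N) * qfalling (N - 1) k"
  unfolding qfalling_def prod.lessThan_Suc_shift by (simp add: algebra_simps)

lemma qbinom_eq_qfalling: "N \<ge> 0 \<Longrightarrow> qbinom N (int k) = qfalling N k / qfact k"
proof (cases "int k \<le> N")
  case True
  then show ?thesis unfolding qbinom_def qfalling_def qfact_def by simp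
next
  case False
  moreover assume "N \<ge> 0"
  \<comment> \<open>the factor with j = N vanishes\<close>
  ultimately have "qfalling N k = 0"
    unfolding qfalling_def by (auto intro!: bexI[of _ "nat N"])
  with False show ?thesis unfolding qbinom_def by simp
qed

lemma qbinom_eq_0: "N < k \<Longrightarrow> qbinom N k = 0"
  unfolding qbinom_def by simp

lemma qpow_mult: "qpow a * qpow b = qpow (a + b)"
  by (rule fls_X_intpow_times_fls_X_intpow)

lemma qbinom_pascal:
  "qbinom N (int k + 1) = qbinom (N - 1) (int k) + qpow (int k + 1) * qbinom (N - 1) (int k + 1)"
proof (cases "N \<ge> int k + 1")
  case False
  then show ?thesis by (simp add: qbinom_eq_0)
next
  case True
  define P where "P = qfalling (N - 1) k"
  have "qbinom (N - 1) (int k) = (1 - qpow (int k + 1)) * P / qfact (Suc k)"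
    using True qbinom_eq_qfalling[of "N - 1" k] by (simp add: P_def qfact_Suc qfact_nonzero)
  moreover have "qbinom (N - 1) (int k + 1) = P * (1 - qpow (N - 1 - int k)) / qfact (Suc k)"
    using True qbinom_eq_qfalling[of "N - 1" "Suc k"]
    unfolding P_def qfalling_Suc of_nat_Suc add.commute[of 1] by simp
  moreover have "qbinom N (int k + 1) = (1 - qpow N) * P / qfact (Suc k)"
    using True qbinom_eq_qfalling[of N "Suc k"]
    unfolding P_def qfalling_Suc_shift of_nat_Suc add.commute[of 1] by simp
  moreover have "qpow (int k + 1) * qpow (N - 1 - int k) = qpow N"
    by (simp only: qpow_mult) simp
  ultimately show ?thesis
    by (simp add: add_divide_distrib[symmetric] algebra_simps)
qed

lemma qbinom_absorption:
  "(qpow m - 1) * qbinom (m + int j) (int j)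
   = (qpow (m + int j) - 1) * qbinom (m + int j - 1) (int j)"
proof (cases "m \<ge> 1")
  case False
  then consider "m = 0" | "m < 0" by linarith
  then show ?thesis by cases (simp_all add: qbinom_eq_0)
next
  case True
  then have "qbinom (m + int j) (int j) = qfalling (m + int j) j / qfact j"
    and "qbinom (m + int j - 1) (int j) = qfalling (m + int j - 1) j / qfact j"
    using qbinom_eq_qfalling by simp_all
  moreover have "(qpow m - 1) * qfalling (m + int j) j
      = (qpow (m + int j) - 1) * qfalling (m + int j - 1) j"
    using qfalling_Suc[of "m + int j" j] qfalling_Suc_shift[of "m + int j" j]
    by (simp add: algebra_simps)
  ultimately show ?thesis by (simp only: times_divide_eq_right)
qed

lemma qbinom_recurrence:
  "qpow (int j) * qbinom (m + int j - 1) (int j) - qpow (- m) * qbinom (m + int j) (int j + 1)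
   = (1 - qpow (- m)) * qbinom (m + int j) (int j)
     - qpow (int j + 1 - m) * qbinom (m + int j - 1) (int j + 1)"
proof -
  have "qpow (- m) * qpow m = 1"
    by (simp only: qpow_mult) simp
  moreover have "qpow (- m) * qpow (m + int j) = qpow (int j)"
    by (simp only: qpow_mult) simp
  moreover have "qpow (- m) * qpow (int j + 1) = qpow (int j + 1 - m)"
    by (simp only: qpow_mult) simp
  ultimately show ?thesis
    using qbinom_absorption[of m j] qbinom_pascal[of "m + int j" j] by algebra
qed

definition qseries :: "int \<Rightarrow> rat fls fps" where
  "qseries m = Abs_fps (\<lambda>i. (-1) ^ i * qpow (- (int (i + 1) * int i div 2) - int i * m)
      * qbinom (int i + m) (int i))"

lemma Sser_eq_qseries: "Sser n r = fps_to_fls (qseries (int n - 2 * int r))"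
  unfolding Sser_def qseries_def by (simp only: add_diff_eq)

lemma qseries_nth_0: "qseries m $ 0 = (if 0 \<le> m then 1 else 0)"
  unfolding qseries_def qbinom_def by simp

lemma qseries_eq_0: "m < 0 \<Longrightarrow> qseries m = 0"
  unfolding qseries_def by (rule fps_ext) (simp add: qbinom_eq_0)

lemma triangular_Suc: "int (Suc j + 1) * int (Suc j) div 2 = int (j + 1) * int j div 2 + int j + 1"
proof -
  have "int (Suc j + 1) * int (Suc j) = int (j + 1) * int j + 2 * (int j + 1)"
    by (simp add: algebra_simps)
  then show ?thesis by simp
qed

lemma qseries_nth_recurrence:
  "qseries (m - 1) $ Suc j + qseries (m - 1) $ j
   = qseries (m - 2) $ Suc j + (1 - qpow (- m)) * qseries m $ j"
proof -
  define E where "E = - (int (j + 1) * int j div 2) - int j * m"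
  define s :: "rat fls" where "s = (-1) ^ j"
  have e1: "- (int (Suc j + 1) * int (Suc j) div 2) - int (Suc j) * (m - 1) = E + - m"
    and e2: "- (int (j + 1) * int j div 2) - int j * (m - 1) = E + int j"
    and e3: "- (int (Suc j + 1) * int (Suc j) div 2) - int (Suc j) * (m - 2) = E + (int j + 1 - m)"
    unfolding E_def triangular_Suc by (simp_all add: algebra_simps)
  have "qseries (m - 1) $ Suc j = - s * qpow (E + - m) * qbinom (m + int j) (int j + 1)"
    and "qseries (m - 1) $ j = s * qpow (E + int j) * qbinom (m + int j - 1) (int j)"
    and "qseries (m - 2) $ Suc j
         = - s * qpow (E + (int j + 1 - m)) * qbinom (m + int j - 1) (int j + 1)"
    and "qseries m $ j = s * qpow E * qbinom (m + int j) (int j)"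
    unfolding qseries_def fps_nth_Abs_fps e1 e2 e3 unfolding s_def E_def
    by (simp_all add: algebra_simps)
  then show ?thesis
    using qbinom_recurrence[of j m] qpow_mult[of E "- m"] qpow_mult[of E "int j"]
      qpow_mult[of E "int j + 1 - m"]
    by algebra
qed

lemma qseries_recurrence:
  "(1 + fps_X) * qseries (m - 1)
   = qseries (m - 2) + fps_const (1 - qpow (- m)) * fps_X * qseries m + (if m = 1 then 1 else 0)"
proof (rule fps_ext)
  fix i
  show "((1 + fps_X) * qseries (m - 1)) $ i
        = (qseries (m - 2) + fps_const (1 - qpow (- m)) * fps_X * qseries m
           + (if m = 1 then 1 else 0)) $ i"
  proof (cases i)
    case 0
    then show ?thesis by (simp add: qseries_nth_0)
  next
    case (Suc j)
    then show ?thesis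
      using qseries_nth_recurrence[of m j] by (simp add: distrib_right mult.assoc)
  qed
qed

lemma fps_one_plus_X_power_nth:
  "((1 + fps_X) ^ n :: 'a :: field_char_0 fps) $ k = of_nat (n choose k)"
  by (simp flip: fps_binomial_of_nat add: binomial_gbinomial)

lemma one_minus_X_times_one_plus_X_power_middle:
  "((1 - fps_X) * (1 + fps_X) ^ Suc (2 * r) :: 'a :: field_char_0 fps) $ Suc r = 0"
proof -
  have "Suc (2 * r) choose Suc r = Suc (2 * r) choose r"
    using binomial_symmetric[of "Suc r" "Suc (2 * r)"] by simp
  moreover have "((1 - fps_X) * f) $ Suc r = f $ Suc r - f $ r" for f :: "'a fps"
    by (simp add: left_diff_distrib)
  ultimately show ?thesis by (simp only: fps_one_plus_X_power_nth) simp
qed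

lemma qseries_convolution_recurrence:
  assumes "m = int n - 2 * int r"
  shows "((1 - fps_X) * (1 + fps_X) ^ Suc n * qseries (m - 1)) $ Suc r
    = ((1 - fps_X) * (1 + fps_X) ^ n * qseries (m - 2)) $ Suc r
      + (1 - qpow (- m)) * ((1 - fps_X) * (1 + fps_X) ^ n * qseries m) $ r"
proof -
  define W :: "rat fls fps" where "W = (1 - fps_X) * (1 + fps_X) ^ n"
  \<comment> \<open>The correction term of \<open>qseries_recurrence\<close> only matters when
    n = 2r + 1, where it meets the vanishing middle coefficient of (1 - w)(1 + w)^n.\<close>
  have "(W * (if m = 1 then 1 else 0)) $ Suc r = 0"
  proof (cases "m = 1")
    case True
    with assms have "n = Suc (2 * r)" by linarith
    then have "W $ Suc r = 0"
      unfolding W_def by (simp only: one_minus_X_times_one_plus_X_power_middle)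
    with True show ?thesis by simp
  qed simp
  moreover have "(1 - fps_X) * (1 + fps_X) ^ Suc n * qseries (m - 1)
      = W * ((1 + fps_X) * qseries (m - 1))"
    unfolding W_def by (simp only: power_Suc ac_simps)
  moreover have "W * (fps_const (1 - qpow (- m)) * fps_X * qseries m)
      = fps_X * (fps_const (1 - qpow (- m)) * (W * qseries m))"
    by (simp only: ac_simps)
  ultimately show ?thesis
    unfolding W_def[symmetric] by (simp only: qseries_recurrence distrib_left fps_add_nth) simp
qed

definition A_ct :: "nat \<Rightarrow> nat \<Rightarrow> rat fls" where
  "A_ct n r = qpow (int r * (int n - int r))
     * ((1 - fps_X) * (1 + fps_X) ^ n * qseries (int n - 2 * int r)) $ r"

lemma CT_eq_A_ct:
  "CT ((1 - fls_X) * (1 + fls_X) ^ n * fls_const (qpow (int r * (int n - int r)))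
       * fls_X_intpow (- int r) * Sser n r) = A_ct n r"
proof -
  define F where "F = (1 - fps_X) * (1 + fps_X) ^ n * qseries (int n - 2 * int r)"
  have "(1 - fls_X) * (1 + fls_X) ^ n * Sser n r = fps_to_fls F"
    unfolding F_def Sser_eq_qseries by (simp add: fls_times_fps_to_fls fps_to_fls_power)
  moreover have "(1 - fls_X) * (1 + fls_X) ^ n * fls_const (qpow (int r * (int n - int r)))
       * fls_X_intpow (- int r) * Sser n r
     = fls_const (qpow (int r * (int n - int r)))
       * (fls_X_intpow (- int r) * ((1 - fls_X) * (1 + fls_X) ^ n * Sser n r))"
    by (simp only: ac_simps)
  moreover have "fls_X_intpow (- int r) * fps_to_fls F = fls_shift (int r) (fps_to_fls F)"
    using fls_X_intpow_times_conv_shift(1)[of "- int r"] by simp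
  ultimately have "(1 - fls_X) * (1 + fls_X) ^ n * fls_const (qpow (int r * (int n - int r)))
       * fls_X_intpow (- int r) * Sser n r
     = fls_const (qpow (int r * (int n - int r))) * fls_shift (int r) (fps_to_fls F)"
    by (simp only:)
  then show ?thesis
    unfolding CT_def A_ct_def F_def[symmetric] by (simp only:) simp
qed

lemma A_ct_0_right: "A_ct n 0 = 1"
  unfolding A_ct_def by (simp add: qseries_nth_0 fps_nth_power_0)

lemma A_ct_0_Suc: "A_ct 0 (Suc r) = 0"
  unfolding A_ct_def by (simp add: qseries_eq_0)

lemma A_ct_Suc_Suc:
  "A_ct (Suc n) (Suc r)
   = qpow (int r + 1) * A_ct n (Suc r) + (qpow (int n - int r) - qpow (int r)) * A_ct n r"
proof -
  define m where "m = int n - 2 * int r"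
  define W :: "rat fls fps" where "W = (1 - fps_X) * (1 + fps_X) ^ n"
  have "int (Suc n) - 2 * int (Suc r) = m - 1" and "int n - 2 * int (Suc r) = m - 2"
    and "int (Suc r) * (int (Suc n) - int (Suc r)) = (int r + 1) * (int n - int r)"
    and "int (Suc r) * (int n - int (Suc r)) = (int r + 1) * (int n - int r - 1)"
    unfolding m_def by (simp_all add: algebra_simps)
  then have "A_ct (Suc n) (Suc r) = qpow ((int r + 1) * (int n - int r))
      * ((1 - fps_X) * (1 + fps_X) ^ Suc n * qseries (m - 1)) $ Suc r"
    and "A_ct n (Suc r) = qpow ((int r + 1) * (int n - int r - 1)) * (W * qseries (m - 2)) $ Suc r"
    and "A_ct n r = qpow (int r * (int n - int r)) * (W * qseries m) $ r"
    unfolding A_ct_def W_def m_def by (simp_all only:)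
  moreover have
    "qpow (int r + 1) * qpow ((int r + 1) * (int n - int r - 1))
     = qpow ((int r + 1) * (int n - int r))"
    and "qpow (int n - int r) * qpow (int r * (int n - int r))
         = qpow ((int r + 1) * (int n - int r))"
    and "qpow (int r) * qpow (int r * (int n - int r))
         = qpow ((int r + 1) * (int n - int r)) * qpow (- m)"
    unfolding m_def by (simp_all only: qpow_mult) (simp_all add: algebra_simps)
  ultimately show ?thesis
    using qseries_convolution_recurrence[OF m_def] unfolding W_def[symmetric] by algebra
qed

lemma A_eq_A_ct: "A n r = A_ct n r"
  by (induction n r rule: A.induct) (simp_all add: A_ct_0_right A_ct_0_Suc A_ct_Suc_Suc)

theorem lemma1:
  fixes n r :: nat
  shows "A n r = CT ((1 - fls_X) * (1 + fls_X) ^ n * fls_const (qpow (int r * (int n - int r)))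
                     * fls_X_intpow (- int r) * Sser n r)"
  unfolding CT_eq_A_ct by (rule A_eq_A_ct)

end
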